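(* Let $\mathbb V$ be a Schubert representation of $\widehat H_n$ with generic Schubert classes $\{\mathcal Y_w\}$ and evaluation map $\operatorname{ev}$. For $u,v\in S_n$, $\operatorname{ev}(\overline T_u\cdot\mathcal Y_v)=\operatorname{ev}(\mathcal Y_{\mathrm{id}})$ if $u=v$ and $=0$ otherwise. Moreover, for every $\mathcal Y\in\mathbb V$, $$\mathcal Y=\frac{1}{\operatorname{ev}(\mathcal Y_{\mathrm{id}})}\sum_{w\in S_n}\operatorname{ev}(\overline T_w\cdot\mathcal Y)\,\mathcal Y_w.$$
   Context: $\mathcal A_\hbar=\mathbb Q[p,q,\hbar]$. The affine Hecke algebra $\widehat H_n$ over $\mathcal A_\hbar$ is generated by $T_1,\dots,T_{n-1}$, $x_1,\dots,x_n$ with relations $(T_i+p)(T_i-q)=0$, the braid relations $T_iT_j=T_jT_i$ ($|i-j|>1$), $T_iT_{i+1}T_i=T_{i+1}T_iT_{i+1}$, $x_ix_j=x_jx_i$, $T_ix_j=x_jT_i$ ($j\ne i,i+1$), $T_ix_i=x_{i+1}T_i+(\hbar-(p-q)x_i)$, $T_ix_{i+1}=x_iT_i-(\hbar-(p-q)x_i)$. For a reduced word $w=s_{i_1}\cdots s_{i_\ell}$, $T_w=T_{i_1}\cdots T_{i_\ell}$, and $\overline T_w=\overline T_{i_1}\cdots\overline T_{i_\ell}$ with $\overline T_i=T_i+p-q$. A Schubert representation: a field $\mathbb F$ with $t_1,\dots,t_n\in\mathbb F$, a ring map $\mathcal A_\hbar\to\mathbb F$, an $\mathbb F$-vector space $\mathbb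 V$ with a $\widehat H_n$-action in which $\mathcal A_\hbar$ acts through $\mathbb F$, a distinguished $\mathcal Y_{w_0}$ ($w_0$ longest in $S_n$) such that $\mathcal Y_w:=T_{w^{-1}w_0}\cdot\mathcal Y_{w_0}$ form a basis, and an $\mathbb F$-linear $\operatorname{ev}\colon\mathbb V\to\mathbb F$ with $\operatorname{ev}(\mathcal Y_w)\ne0\iff w=\mathrm{id}$ and $\operatorname{ev}(x_i\cdot\mathcal Y_w)=t_i\operatorname{ev}(\mathcal Y_w)$. *)

theory Defs
  imports Complex_Main "HOL-Combinatorics.Transposition" "HOL-Combinatorics.Permutations"
begin

definition Sn :: "nat \<Rightarrow> (nat \<Rightarrow> nat) set" where
  "Sn n = {w. w permutes {1..n}}"

definition simple_refl :: "nat \<Rightarrow> nat \<Rightarrow> nat" where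
  "simple_refl i = transpose i (Suc i)"

definition perm_of_word :: "nat list \<Rightarrow> nat \<Rightarrow> nat" where
  "perm_of_word ws = foldr (\<lambda>i f. simple_refl i \<circ> f) ws id"

definition reduced_word :: "nat \<Rightarrow> (nat \<Rightarrow> nat) \<Rightarrow> nat list \<Rightarrow> bool" where
  "reduced_word n w ws \<longleftrightarrow> set ws \<subseteq> {1..<n} \<and> perm_of_word ws = w \<and>
     (\<forall>vs. set vs \<subseteq> {1..<n} \<and> perm_of_word vs = w \<longrightarrow> length ws \<le> length vs)"

definition w0 :: "nat \<Rightarrow> nat \<Rightarrow> nat" where
  "w0 n i = (if i \<in> {1..n} then n + 1 - i else i)"

definition word_op :: "(nat \<Rightarrow> 'v \<Rightarrow> 'v) \<Rightarrow> nat list \<Rightarrow> 'v \<Rightarrow> 'v" where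
  "word_op G ws = foldr (\<lambda>i f. G i \<circ> f) ws id"

definition T_perm :: "nat \<Rightarrow> (nat \<Rightarrow> 'v \<Rightarrow> 'v) \<Rightarrow> (nat \<Rightarrow> nat) \<Rightarrow> 'v \<Rightarrow> 'v" where
  "T_perm n T w = word_op T (SOME ws. reduced_word n w ws)"

definition Tbar :: "('f \<Rightarrow> 'v \<Rightarrow> 'v::ab_group_add) \<Rightarrow> 'f::field \<Rightarrow> 'f \<Rightarrow> (nat \<Rightarrow> 'v \<Rightarrow> 'v) \<Rightarrow> nat \<Rightarrow> 'v \<Rightarrow> 'v" where
  "Tbar scale p q T i v = T i v + scale (p - q) v"

text \<open>Action of the affine Hecke algebra on the F-vector space V (given by the images of
  the generators T_1..T_{n-1}, x_1..x_n as F-linear maps; the scalars p, q, hb in F are the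
  images of p, q, \<open>\<hbar>\<close> under the ring map).\<close>
definition hecke_action ::
  "nat \<Rightarrow> 'f::field \<Rightarrow> 'f \<Rightarrow> 'f \<Rightarrow> ('f \<Rightarrow> 'v \<Rightarrow> 'v::ab_group_add)
   \<Rightarrow> (nat \<Rightarrow> 'v \<Rightarrow> 'v) \<Rightarrow> (nat \<Rightarrow> 'v \<Rightarrow> 'v) \<Rightarrow> bool" where
  "hecke_action n p q hb scale T X \<longleftrightarrow>
     (\<forall>i\<in>{1..<n}. Vector_Spaces.linear scale scale (T i)) \<and>
     (\<forall>i\<in>{1..n}. Vector_Spaces.linear scale scale (X i)) \<and>
     (\<forall>i\<in>{1..<n}. \<forall>v. T i (T i v) + scale (p - q) (T i v) - scale (p * q) v = 0) \<and>
     (\<forall>i\<in>{1..<n}. \<forall>j\<in>{1..<n}. (i + 1 < j \<or> j + 1 < i) \<longrightarrow> (\<forall>v. T i (T j v) = T j (T i v))) \<and>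
     (\<forall>i. 1 \<le> i \<and> i + 1 < n \<longrightarrow> (\<forall>v. T i (T (i+1) (T i v)) = T (i+1) (T i (T (i+1) v)))) \<and>
     (\<forall>i\<in>{1..n}. \<forall>j\<in>{1..n}. \<forall>v. X i (X j v) = X j (X i v)) \<and>
     (\<forall>i\<in>{1..<n}. \<forall>j\<in>{1..n}. j \<noteq> i \<and> j \<noteq> i + 1 \<longrightarrow> (\<forall>v. T i (X j v) = X j (T i v))) \<and>
     (\<forall>i\<in>{1..<n}. \<forall>v. T i (X i v) = X (i+1) (T i v) + (scale hb v - scale (p - q) (X i v))) \<and>
     (\<forall>i\<in>{1..<n}. \<forall>v. T i (X (i+1) v) = X i (T i v) - (scale hb v - scale (p - q) (X i v)))"

end

theory Submission imports Defs begin

(* Matsumoto's theorem (reduced words of the same permutation are related by braid moves) makes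
   T_w independent of the chosen reduced word, so T_j Y_v = Y_(v s_j) whenever v(j+1) < v(j);
   with the quadratic relation this gives
     Tbar_j Y_v = Y_(v s_j) + (p - q) Y_v   if v(j+1) < v(j),
     Tbar_j Y_v = p q Y_(v s_j)             if v(j) < v(j+1).
   Peeling letters off the right end of a reduced word of u and using that ev vanishes on Y_w
   for w <> id, induction gives ev (Tbar_u Y_v) = ev (Y_id) if u = v and 0 otherwise. So the
   functionals ev (Tbar_u _) / ev (Y_id) are dual to the basis Y, which is the expansion. *)

lemma simple_refl_permutes: "i \<in> {1..<n} \<Longrightarrow> simple_refl i permutes {1..n}"
  unfolding simple_refl_def by (rule permutes_swap_id) auto

lemma simple_refl_apply [simp]:
  "simple_refl i i = Suc i" "simple_refl i (Suc i) = i"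
  "x \<noteq> i \<Longrightarrow> x \<noteq> Suc i \<Longrightarrow> simple_refl i x = x"
  by (simp_all add: simple_refl_def)

lemma simple_refl_simple_refl [simp]: "simple_refl i (simple_refl i x) = x"
  by (simp add: simple_refl_def)

lemma simple_refl_comp_simple_refl [simp]:
  "simple_refl i \<circ> (simple_refl i \<circ> w) = w" "w \<circ> simple_refl i \<circ> simple_refl i = w"
  by (simp_all add: fun_eq_iff)

lemma bij_simple_refl [simp]: "bij (simple_refl i)"
  by (simp add: simple_refl_def)

lemma inv_simple_refl [simp]: "inv (simple_refl i) = simple_refl i"
  by (simp add: simple_refl_def)

lemma inv_simple_refl_comp: "bij w \<Longrightarrow> inv (simple_refl i \<circ> w) = inv w \<circ> simple_refl i"
  by (simp add: o_inv_distrib)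

lemma simple_refl_comp_commute:
  "Suc i < j \<or> Suc j < i \<Longrightarrow> simple_refl i \<circ> (simple_refl j \<circ> w) = simple_refl j \<circ> (simple_refl i \<circ> w)"
  unfolding simple_refl_def by (auto simp: fun_eq_iff transpose_def)

lemma simple_refl_comp_braid:
  "simple_refl i \<circ> (simple_refl (Suc i) \<circ> (simple_refl i \<circ> w))
     = simple_refl (Suc i) \<circ> (simple_refl i \<circ> (simple_refl (Suc i) \<circ> w))"
  unfolding simple_refl_def by (auto simp: fun_eq_iff transpose_def)

lemma perm_of_word_Nil [simp]: "perm_of_word [] = id"
  by (simp add: perm_of_word_def)

lemma perm_of_word_Cons [simp]: "perm_of_word (i # ws) = simple_refl i \<circ> perm_of_word ws"
  by (simp add: perm_of_word_def)

lemma perm_of_word_Cons_eq_iff: "perm_of_word (i # ws) = w \<longleftrightarrow> perm_of_word ws = simple_refl i \<circ> w"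
  by auto

lemma perm_of_word_snoc: "perm_of_word (ws @ [j]) = perm_of_word ws \<circ> simple_refl j"
  by (induction ws) (simp_all add: o_assoc)

lemma bij_perm_of_word: "bij (perm_of_word ws)"
proof (induction ws)
  case Nil
  show ?case
    unfolding perm_of_word_Nil by (rule bij_id)
next
  case (Cons i ws)
  then show ?case
    unfolding perm_of_word_Cons by (rule bij_comp[OF _ bij_simple_refl])
qed

lemma perm_of_word_rev: "perm_of_word (rev ws) = inv (perm_of_word ws)"
proof (induction ws)
  case Nil
  show ?case
    unfolding rev.simps perm_of_word_Nil by (rule inv_id[symmetric])
next
  case (Cons i ws)
  then show ?case
    unfolding rev.simps perm_of_word_snoc perm_of_word_Cons
    by (simp only: inv_simple_refl_comp[OF bij_perm_of_word])
qed

lemma perm_of_word_permutes: "set ws \<subseteq> {1..<n} \<Longrightarrow> perm_of_word ws permutes {1..n}"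
proof (induction ws)
  case (Cons i ws)
  then have "i \<in> {1..<n}" "perm_of_word ws permutes {1..n}"
    by simp_all
  then show ?case
    unfolding perm_of_word_Cons by (intro permutes_compose simple_refl_permutes)
qed (simp add: permutes_id)

lemma word_op_Nil [simp]: "word_op G [] = id"
  by (simp add: word_op_def)

lemma word_op_Cons [simp]: "word_op G (i # ws) = G i \<circ> word_op G ws"
  by (simp add: word_op_def)

lemma word_op_snoc: "word_op G (ws @ [j]) = word_op G ws \<circ> G j"
  by (induction ws) (simp_all add: o_assoc)

definition inversions :: "nat set \<Rightarrow> (nat \<Rightarrow> nat) \<Rightarrow> (nat \<times> nat) set" where
  "inversions S w = {(a, b) \<in> S \<times> S. a < b \<and> w b < w a}"

lemma finite_inversions: "finite S \<Longrightarrow> finite (inversions S w)"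
  by (rule finite_subset[of _ "S \<times> S"]) (auto simp: inversions_def)

lemma inversions_id [simp]: "inversions S id = {}"
  by (auto simp: inversions_def)

lemma card_inversions_inv:
  assumes w: "w permutes S"
  shows "card (inversions S (inv w)) = card (inversions S w)"
proof -
  have "bij_betw (\<lambda>(a, b). (inv w b, inv w a)) (inversions S (inv w)) (inversions S w)"
    by (rule bij_betwI[where g = "\<lambda>(a, b). (w b, w a)"])
       (auto simp: inversions_def permutes_inverses[OF w] permutes_in_image[OF w]
          permutes_in_image[OF permutes_inv[OF w]])
  then show ?thesis
    by (rule bij_betw_same_card)
qed

lemma card_inversions_simple_refl_comp_ascent:
  assumes w: "w permutes S" and "finite S" and i: "i \<in> S" "Suc i \<in> S"
    and asc: "inv w i < inv w (Suc i)"
  shows "card (inversions S (simple_refl i \<circ> w)) = Suc (card (inversions S w))"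
proof -
  define a b where "a = inv w i" and "b = inv w (Suc i)"
  have ab: "a \<in> S" "b \<in> S" "a < b"
    using i asc unfolding a_def b_def by (simp_all add: permutes_in_image[OF permutes_inv[OF w]])
  have wa: "w x = i \<longleftrightarrow> x = a" and wb: "w x = Suc i \<longleftrightarrow> x = b" for x
    unfolding a_def b_def by (metis permutes_inverses[OF w])+
  have "(x, y) \<in> inversions S (simple_refl i \<circ> w) \<longleftrightarrow> (x, y) \<in> insert (a, b) (inversions S w)"
    for x y
    using ab wa[of x] wb[of x] wa[of y] wb[of y]
    by (auto simp: inversions_def simple_refl_def transpose_def)
  then have "inversions S (simple_refl i \<circ> w) = insert (a, b) (inversions S w)"
    by auto
  moreover have "(a, b) \<notin> inversions S w"
    using ab wa[of a] wb[of b] by (auto simp: inversions_def)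
  ultimately show ?thesis
    by (simp add: finite_inversions \<open>finite S\<close>)
qed

definition perm_length :: "nat \<Rightarrow> (nat \<Rightarrow> nat) \<Rightarrow> nat" where
  "perm_length n w = card (inversions {1..n} w)"

lemma perm_length_id [simp]: "perm_length n id = 0"
  by (simp add: perm_length_def)

lemma perm_length_inv: "w permutes {1..n} \<Longrightarrow> perm_length n (inv w) = perm_length n w"
  unfolding perm_length_def by (rule card_inversions_inv)

lemma perm_length_simple_refl_comp_ascent:
  assumes "w permutes {1..n}" "i \<in> {1..<n}" "inv w i < inv w (Suc i)"
  shows "perm_length n (simple_refl i \<circ> w) = Suc (perm_length n w)"
  unfolding perm_length_def using assms by (intro card_inversions_simple_refl_comp_ascent) auto

lemma perm_length_simple_refl_comp_descent:
  assumes w: "w permutes {1..n}" and i: "i \<in> {1..<n}" and desc: "inv w (Suc i) < inv w i"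
  shows "perm_length n w = Suc (perm_length n (simple_refl i \<circ> w))"
proof -
  let ?v = "simple_refl i \<circ> w"
  have "?v permutes {1..n}"
    using w i by (intro permutes_compose simple_refl_permutes)
  moreover have "inv ?v i < inv ?v (Suc i)"
    using desc by (simp add: inv_simple_refl_comp permutes_bij[OF w])
  ultimately have "perm_length n (simple_refl i \<circ> ?v) = Suc (perm_length n ?v)"
    using i by (intro perm_length_simple_refl_comp_ascent)
  then show ?thesis
    by simp
qed

lemma inv_neq_inv_Suc: "w permutes S \<Longrightarrow> inv w i \<noteq> inv w (Suc i)"
  by (metis n_not_Suc_n permutes_inverses(1))

lemma perm_length_simple_refl_comp_le:
  assumes w: "w permutes {1..n}" and i: "i \<in> {1..<n}"
  shows "perm_length n (simple_refl i \<circ> w) \<le> Suc (perm_length n w)"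
  using perm_length_simple_refl_comp_ascent[OF w i] perm_length_simple_refl_comp_descent[OF w i]
    inv_neq_inv_Suc[OF w, of i]
  by (cases "inv w i < inv w (Suc i)") auto

lemma perm_length_perm_of_word_le:
  "set ws \<subseteq> {1..<n} \<Longrightarrow> perm_length n (perm_of_word ws) \<le> length ws"
proof (induction ws)
  case Nil
  show ?case
    unfolding perm_of_word_Nil perm_length_id by simp
next
  case (Cons i ws)
  then have "i \<in> {1..<n}" "set ws \<subseteq> {1..<n}"
    by simp_all
  with Cons.IH have "perm_length n (simple_refl i \<circ> perm_of_word ws) \<le> Suc (length ws)"
    by (meson Suc_le_mono le_trans perm_length_simple_refl_comp_le perm_of_word_permutes)
  then show ?case
    by (simp only: perm_of_word_Cons length_Cons)
qed

lemma ascending_permutes_eq_id: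
  assumes g: "g permutes {1..n}" and asc: "\<And>i. i \<in> {1..<n} \<Longrightarrow> g i < g (Suc i)"
  shows "g = id"
proof
  have range: "g i \<in> {1..n}" if "i \<in> {1..n}" for i
    using that permutes_in_image[OF g] by blast
  have lower: "i \<le> g i" if "i \<in> {1..n}" for i
    using that
  proof (induction i)
    case (Suc k)
    show ?case
    proof (cases "k = 0")
      case False
      with Suc.prems have "k \<le> g k" "g k < g (Suc k)"
        using Suc.IH asc by auto
      then show ?thesis
        by simp
    qed (use range[OF Suc.prems] in simp)
  qed simp
  have upper: "g i \<le> i" if "i \<in> {1..n}" for i
    using that
  proof (induction "n - i" arbitrary: i)
    case 0
    then show ?case
      using range[OF 0(2)] by simp
  next
    case (Suc d)
    then have "g (Suc i) \<le> Suc i" "g i < g (Suc i)"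
      using asc by auto
    then show ?case
      by simp
  qed
  show "g x = id x" for x
  proof (cases "x \<in> {1..n}")
    case True
    then show ?thesis
      using lower[OF True] upper[OF True] by simp
  qed (simp add: permutes_not_in[OF g])
qed

definition reduced :: "nat \<Rightarrow> nat list \<Rightarrow> bool" where
  "reduced n ws \<longleftrightarrow> set ws \<subseteq> {1..<n} \<and> perm_length n (perm_of_word ws) = length ws"

lemma reduced_length_eq:
  "reduced n ws \<Longrightarrow> reduced n ws' \<Longrightarrow> perm_of_word ws = perm_of_word ws' \<Longrightarrow> length ws = length ws'"
  by (simp add: reduced_def)

lemma reduced_rev: "reduced n (rev ws) \<longleftrightarrow> reduced n ws"
  unfolding reduced_def
  by (auto simp: perm_of_word_rev perm_length_inv[OF perm_of_word_permutes])

lemma reduced_Cons_ascent: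
  assumes "reduced n ws" "i \<in> {1..<n}"
    and "inv (perm_of_word ws) i < inv (perm_of_word ws) (Suc i)"
  shows "reduced n (i # ws)"
  using assms perm_length_simple_refl_comp_ascent[OF perm_of_word_permutes]
  by (auto simp: reduced_def)

lemma reduced_ConsD:
  assumes red: "reduced n (i # ws)"
  shows "reduced n ws" and "inv (perm_of_word (i # ws)) (Suc i) < inv (perm_of_word (i # ws)) i"
proof -
  let ?w = "perm_of_word ws"
  have i: "i \<in> {1..<n}" and ws: "set ws \<subseteq> {1..<n}"
    and len: "perm_length n (simple_refl i \<circ> ?w) = Suc (length ws)"
    using red by (simp_all add: reduced_def)
  have w: "?w permutes {1..n}"
    using ws by (rule perm_of_word_permutes)
  have asc: "inv ?w i < inv ?w (Suc i)"
  proof (rule ccontr)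
    assume "\<not> ?thesis"
    then have "inv ?w (Suc i) < inv ?w i"
      using inv_neq_inv_Suc[OF w, of i] by linarith
    then have "perm_length n ?w = Suc (Suc (length ws))"
      using perm_length_simple_refl_comp_descent[OF w i] len by simp
    with perm_length_perm_of_word_le[OF ws] show False
      by simp
  qed
  show "reduced n ws"
    using perm_length_simple_refl_comp_ascent[OF w i asc] len ws by (simp add: reduced_def)
  show "inv (perm_of_word (i # ws)) (Suc i) < inv (perm_of_word (i # ws)) i"
    using asc by (simp add: inv_simple_refl_comp bij_perm_of_word)
qed

lemma reduced_snocD:
  assumes "reduced n (ws @ [j])"
  shows "reduced n ws" and "perm_of_word ws j < perm_of_word ws (Suc j)"
proof -
  have red: "reduced n (j # rev ws)"
    using assms reduced_rev[of n "ws @ [j]"] by simp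
  show "reduced n ws"
    using reduced_ConsD(1)[OF red] by (simp add: reduced_rev)
  have "inv (perm_of_word (j # rev ws)) = perm_of_word ws \<circ> simple_refl j"
    by (simp add: perm_of_word_rev inv_simple_refl_comp bij_perm_of_word bij_imp_bij_inv inv_inv_eq)
  then show "perm_of_word ws j < perm_of_word ws (Suc j)"
    using reduced_ConsD(2)[OF red] by simp
qed

lemma reduced_word_exists: "w permutes {1..n} \<Longrightarrow> \<exists>ws. reduced n ws \<and> perm_of_word ws = w"
proof (induction "perm_length n w" arbitrary: w rule: less_induct)
  case less
  show ?case
  proof (cases "\<exists>i\<in>{1..<n}. inv w (Suc i) < inv w i")
    case True
    then obtain i where i: "i \<in> {1..<n}" "inv w (Suc i) < inv w i"
      by blast
    have len: "perm_length n w = Suc (perm_length n (simple_refl i \<circ> w))"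
      using perm_length_simple_refl_comp_descent[OF less.prems i] .
    obtain ws where ws: "reduced n ws" "perm_of_word ws = simple_refl i \<circ> w"
      using less.hyps[OF _ permutes_compose[OF less.prems simple_refl_permutes[OF i(1)]]] len
      by auto
    have "reduced n (i # ws)"
      using ws i len by (simp add: reduced_def)
    moreover have "perm_of_word (i # ws) = w"
      using ws by simp
    ultimately show ?thesis
      by blast
  next
    case False
    then have "inv w i < inv w (Suc i)" if "i \<in> {1..<n}" for i
      using that inv_neq_inv_Suc[OF less.prems, of i] by (meson linorder_neqE_nat)
    then have "inv w = id"
      by (rule ascending_permutes_eq_id[OF permutes_inv[OF less.prems]])
    then have "w = id"
      by (metis inv_id inv_inv_eq permutes_bij[OF less.prems])
    then have "reduced n [] \<and> perm_of_word [] = w"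
      by (simp add: reduced_def)
    then show ?thesis
      by blast
  qed
qed

lemma reduced_word_iff:
  assumes w: "w permutes {1..n}"
  shows "reduced_word n w ws \<longleftrightarrow> reduced n ws \<and> perm_of_word ws = w"
proof -
  obtain vs where "reduced n vs" "perm_of_word vs = w"
    using reduced_word_exists[OF w] by blast
  then show ?thesis
    unfolding reduced_word_def reduced_def
    using perm_length_perm_of_word_le by (metis le_antisym)
qed

lemma T_perm_obtain_reduced_word:
  assumes "w permutes {1..n}"
  obtains ws where "reduced n ws" "perm_of_word ws = w" "T_perm n G w = word_op G ws"
proof -
  define ws where "ws = (SOME ws. reduced_word n w ws)"
  have "\<exists>ws. reduced_word n w ws"
    using reduced_word_exists[OF assms] by (simp add: reduced_word_iff[OF assms])
  then have "reduced_word n w ws"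
    unfolding ws_def by (rule someI_ex)
  moreover have "T_perm n G w = word_op G ws"
    unfolding T_perm_def ws_def ..
  ultimately show ?thesis
    using that reduced_word_iff[OF assms] by blast
qed

locale braid_relations =
  fixes n :: nat and G :: "nat \<Rightarrow> 'v \<Rightarrow> 'v"
  assumes comm: "\<And>i j v. i \<in> {1..<n} \<Longrightarrow> j \<in> {1..<n} \<Longrightarrow> Suc i < j \<Longrightarrow> G i (G j v) = G j (G i v)"
    and braid: "\<And>i v. i \<in> {1..<n} \<Longrightarrow> Suc i \<in> {1..<n} \<Longrightarrow>
      G i (G (Suc i) (G i v)) = G (Suc i) (G i (G (Suc i) v))"
begin

(* IH is Matsumoto's theorem for shorter words: it rewrites both sides into words with a common
   reduced tail c, after which a single commutation or braid relation finishes. *)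
lemma word_op_Cons_eq_commuting:
  assumes IH: "\<And>x y. length x < length (s # a) \<Longrightarrow> reduced n x \<Longrightarrow> reduced n y \<Longrightarrow>
      perm_of_word x = perm_of_word y \<Longrightarrow> word_op G x = word_op G y"
    and red: "reduced n (s # a)" "reduced n (t # b)"
    and eq: "perm_of_word (s # a) = perm_of_word (t # b)" and st: "Suc s < t \<or> Suc t < s"
  shows "word_op G (s # a) = word_op G (t # b)"
proof -
  define w where "w = perm_of_word (s # a)"
  have s: "s \<in> {1..<n}" and t: "t \<in> {1..<n}"
    using red by (simp_all add: reduced_def)
  have "bij w"
    unfolding w_def by (rule bij_perm_of_word)
  have desc: "inv w (Suc s) < inv w s" "inv w (Suc t) < inv w t"
    using reduced_ConsD(2)[OF red(1)] reduced_ConsD(2)[OF red(2)] eq by (simp_all add: w_def)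
  let ?x = "simple_refl t \<circ> (simple_refl s \<circ> w)"
  have "?x permutes {1..n}"
    using s t red(1) unfolding w_def reduced_def
    by (intro permutes_compose simple_refl_permutes perm_of_word_permutes) simp_all
  then obtain c where c: "reduced n c" "perm_of_word c = ?x"
    using reduced_word_exists by blast
  have "simple_refl s t = t" "simple_refl s (Suc t) = Suc t"
    "simple_refl t s = s" "simple_refl t (Suc s) = Suc s"
    using st by auto
  then have tc: "reduced n (t # c)" and sc: "reduced n (s # c)"
    using c s t desc by (auto intro!: reduced_Cons_ascent simp: inv_simple_refl_comp bij_comp \<open>bij w\<close>)
  have "perm_of_word a = simple_refl s \<circ> w" "perm_of_word b = simple_refl t \<circ> w"
    using eq unfolding w_def by (metis perm_of_word_Cons_eq_iff)+
  then have pa: "perm_of_word a = perm_of_word (t # c)" and pb: "perm_of_word b = perm_of_word (s # c)"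
    using c(2) simple_refl_comp_commute[OF st, of "simple_refl s \<circ> w"] by simp_all
  have "word_op G a = word_op G (t # c)"
    by (rule IH[OF _ reduced_ConsD(1)[OF red(1)] tc pa]) simp
  moreover have "word_op G b = word_op G (s # c)"
    by (rule IH[OF _ reduced_ConsD(1)[OF red(2)] sc pb]) (use reduced_length_eq[OF red eq] in simp)
  moreover have "G s (G t v) = G t (G s v)" for v
    using st comm[OF s t] comm[OF t s] by auto
  ultimately show ?thesis
    by (simp add: fun_eq_iff)
qed

lemma word_op_Cons_eq_braid:
  assumes IH: "\<And>x y. length x < length (s # a) \<Longrightarrow> reduced n x \<Longrightarrow> reduced n y \<Longrightarrow>
      perm_of_word x = perm_of_word y \<Longrightarrow> word_op G x = word_op G y"
    and red: "reduced n (s # a)" "reduced n (Suc s # b)"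
    and eq: "perm_of_word (s # a) = perm_of_word (Suc s # b)"
  shows "word_op G (s # a) = word_op G (Suc s # b)"
proof -
  define w where "w = perm_of_word (s # a)"
  have s: "s \<in> {1..<n}" and t: "Suc s \<in> {1..<n}"
    using red by (simp_all add: reduced_def)
  have "bij w"
    unfolding w_def by (rule bij_perm_of_word)
  have desc: "inv w (Suc s) < inv w s" "inv w (Suc (Suc s)) < inv w (Suc s)"
    using reduced_ConsD(2)[OF red(1)] reduced_ConsD(2)[OF red(2)] eq by (simp_all add: w_def)
  let ?x = "simple_refl s \<circ> (simple_refl (Suc s) \<circ> (simple_refl s \<circ> w))"
  have "?x permutes {1..n}"
    using s t red(1) unfolding w_def reduced_def
    by (intro permutes_compose simple_refl_permutes perm_of_word_permutes) simp_all
  then obtain c where c: "reduced n c" "perm_of_word c = ?x"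
    using reduced_word_exists by blast
  have "reduced n (s # c)" "reduced n (Suc s # c)"
    using c s t desc by (auto intro!: reduced_Cons_ascent simp: inv_simple_refl_comp bij_comp \<open>bij w\<close>)
  then have tsc: "reduced n (Suc s # s # c)" and stc: "reduced n (s # Suc s # c)"
    using c s t desc by (auto intro!: reduced_Cons_ascent simp: inv_simple_refl_comp bij_comp \<open>bij w\<close>)
  have "perm_of_word a = simple_refl s \<circ> w" "perm_of_word b = simple_refl (Suc s) \<circ> w"
    using eq unfolding w_def by (metis perm_of_word_Cons_eq_iff)+
  then have pa: "perm_of_word a = perm_of_word (Suc s # s # c)"
    and pb: "perm_of_word b = perm_of_word (s # Suc s # c)"
    using c(2) simple_refl_comp_braid[of s "simple_refl (Suc s) \<circ> (simple_refl s \<circ> w)"] by simp_all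
  have "word_op G a = word_op G (Suc s # s # c)"
    by (rule IH[OF _ reduced_ConsD(1)[OF red(1)] tsc pa]) simp
  moreover have "word_op G b = word_op G (s # Suc s # c)"
    by (rule IH[OF _ reduced_ConsD(1)[OF red(2)] stc pb]) (use reduced_length_eq[OF red eq] in simp)
  moreover have "G s (G (Suc s) (G s v)) = G (Suc s) (G s (G (Suc s) v))" for v
    using braid[OF s t] .
  ultimately show ?thesis
    by (simp add: fun_eq_iff)
qed

theorem word_op_reduced_eq:
  "reduced n ws \<Longrightarrow> reduced n ws' \<Longrightarrow> perm_of_word ws = perm_of_word ws' \<Longrightarrow>
    word_op G ws = word_op G ws'"
proof (induction "length ws" arbitrary: ws ws' rule: less_induct)
  case less
  show ?case
  proof (cases ws)
    case Nil
    then show ?thesis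
      using reduced_length_eq[OF less.prems] by simp
  next
    case (Cons s a)
    then obtain t b where ws': "ws' = t # b"
      using reduced_length_eq[OF less.prems] by (cases ws') auto
    have IH: "\<And>x y. length x < length (s # a) \<Longrightarrow> reduced n x \<Longrightarrow> reduced n y \<Longrightarrow>
        perm_of_word x = perm_of_word y \<Longrightarrow> word_op G x = word_op G y"
      using less.hyps Cons by blast
    have red: "reduced n (s # a)" "reduced n (t # b)"
      and eq: "perm_of_word (s # a) = perm_of_word (t # b)"
      using less.prems Cons ws' by simp_all
    consider "s = t" | "Suc s < t \<or> Suc t < s" | "t = Suc s" | "s = Suc t"
      by linarith
    then have "word_op G (s # a) = word_op G (t # b)"
    proof cases
      case 1
      then have "perm_of_word a = perm_of_word b"
        using eq by (metis perm_of_word_Cons_eq_iff)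
      then show ?thesis
        using IH[OF _ reduced_ConsD(1)[OF red(1)] reduced_ConsD(1)[OF red(2)]] 1 by simp
    next
      case 2
      with IH red eq show ?thesis
        by (rule word_op_Cons_eq_commuting)
    next
      case 3
      with IH red eq show ?thesis
        by (metis word_op_Cons_eq_braid)
    next
      case 4
      have "length (t # b) = length (s # a)"
        using reduced_length_eq[OF red eq] ..
      with IH red eq 4 show ?thesis
        by (metis word_op_Cons_eq_braid)
    qed
    then show ?thesis
      using Cons ws' by simp
  qed
qed

lemma T_perm_perm_of_word:
  assumes ws: "reduced n ws"
  shows "T_perm n G (perm_of_word ws) = word_op G ws"
proof -
  have "perm_of_word ws permutes {1..n}"
    using ws unfolding reduced_def by (blast intro: perm_of_word_permutes)
  then obtain vs where "reduced n vs" "perm_of_word vs = perm_of_word ws"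
    and "T_perm n G (perm_of_word ws) = word_op G vs"
    by (rule T_perm_obtain_reduced_word)
  then show ?thesis
    using word_op_reduced_eq[OF _ ws] by simp
qed

lemma T_perm_simple_refl_comp:
  assumes x: "x permutes {1..n}" and i: "i \<in> {1..<n}" and asc: "inv x i < inv x (Suc i)"
  shows "T_perm n G (simple_refl i \<circ> x) = G i \<circ> T_perm n G x"
proof -
  obtain ws where ws: "reduced n ws" "perm_of_word ws = x"
    using reduced_word_exists[OF x] by blast
  then have "reduced n (i # ws)"
    using i asc by (intro reduced_Cons_ascent) simp_all
  from T_perm_perm_of_word[OF this] T_perm_perm_of_word[OF ws(1)] show ?thesis
    using ws(2) by simp
qed

end

lemma (in vector_space) biorthogonal_expansion:
  assumes "finite S" and inj: "inj_on Y S" and spans: "span (Y ` S) = UNIV"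
    and lin: "\<And>u. u \<in> S \<Longrightarrow> Vector_Spaces.linear scale (*) (\<phi> u)"
    and dual: "\<And>u v. u \<in> S \<Longrightarrow> v \<in> S \<Longrightarrow> \<phi> u (Y v) = (if u = v then c else 0)"
    and "c \<noteq> 0"
  shows "y = scale (1 / c) (\<Sum>w\<in>S. scale (\<phi> w y) (Y w))"
proof -
  obtain f where "y = (\<Sum>z\<in>Y ` S. scale (f z) z)"
    using spans span_finite[OF finite_imageI[OF \<open>finite S\<close>]] by blast
  then have y: "y = (\<Sum>v\<in>S. scale (f (Y v)) (Y v))"
    by (simp add: sum.reindex[OF inj])
  have coeff: "\<phi> w y = f (Y w) * c" if w: "w \<in> S" for w
  proof -
    interpret \<phi>: Vector_Spaces.linear scale "(*)" "\<phi> w"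
      by (rule lin[OF w])
    have "\<phi> w y = (\<Sum>v\<in>S. f (Y v) * \<phi> w (Y v))"
      by (subst y) (simp add: \<phi>.sum \<phi>.scale)
    also have "\<dots> = f (Y w) * c"
      using w \<open>finite S\<close> by (simp add: dual if_distrib cong: if_cong)
    finally show ?thesis .
  qed
  have "(\<Sum>w\<in>S. scale (\<phi> w y) (Y w)) = scale c y"
    by (subst (2) y) (simp add: coeff scale_sum_right mult.commute)
  then show ?thesis
    using \<open>c \<noteq> 0\<close> by simp
qed

lemma w0_w0 [simp]: "w0 n (w0 n i) = i"
  by (auto simp: w0_def)

lemma w0_permutes: "w0 n permutes {1..n}"
  unfolding permutes_def by (metis w0_def w0_w0)

lemma inv_w0: "inv (w0 n) = w0 n"
proof -
  have "w0 n \<circ> w0 n = id"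
    by (simp add: fun_eq_iff)
  from inv_unique_comp[OF this this] show ?thesis .
qed

locale hecke_module = vector_space scale
  for scale :: "'f::field \<Rightarrow> 'v::ab_group_add \<Rightarrow> 'v" +
  fixes n :: nat and p q hb :: 'f and T X :: "nat \<Rightarrow> 'v \<Rightarrow> 'v"
  assumes hecke: "hecke_action n p q hb scale T X"
begin

lemma T_linear: "i \<in> {1..<n} \<Longrightarrow> Vector_Spaces.linear scale scale (T i)"
  using hecke by (simp add: hecke_action_def)

lemma T_quadratic: "i \<in> {1..<n} \<Longrightarrow> T i (T i v) = scale (p * q) v - scale (p - q) (T i v)"
  using hecke by (simp add: hecke_action_def algebra_simps)

sublocale braid_relations n T
proof
  show "T i (T j v) = T j (T i v)" if "i \<in> {1..<n}" "j \<in> {1..<n}" "Suc i < j" for i j v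
    using hecke that unfolding hecke_action_def by simp
  show "T i (T (Suc i) (T i v)) = T (Suc i) (T i (T (Suc i) v))"
    if "i \<in> {1..<n}" "Suc i \<in> {1..<n}" for i v
    using hecke that unfolding hecke_action_def by simp
qed

abbreviation Tb :: "nat \<Rightarrow> 'v \<Rightarrow> 'v" where
  "Tb \<equiv> Tbar scale p q T"

interpretation endo: vector_space_pair scale scale ..

lemma word_op_Tb_linear: "set ws \<subseteq> {1..<n} \<Longrightarrow> Vector_Spaces.linear scale scale (word_op Tb ws)"
proof (induction ws)
  case Nil
  show ?case
    unfolding word_op_Nil by (rule linear_id)
next
  case (Cons i ws)
  then have "i \<in> {1..<n}" "Vector_Spaces.linear scale scale (word_op Tb ws)"
    by simp_all
  moreover have "Vector_Spaces.linear scale scale (Tb i)" if "i \<in> {1..<n}"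
    unfolding Tbar_def by (intro endo.linear_compose_add T_linear that linear_scale_self)
  ultimately show ?case
    unfolding word_op_Cons by (blast intro: Vector_Spaces.linear_compose)
qed

end

locale schubert_representation = hecke_module scale n p q hb T X
  for scale :: "'f::field \<Rightarrow> 'v::ab_group_add \<Rightarrow> 'v" and n p q hb T X +
  fixes Yw0 :: 'v and ev :: "'v \<Rightarrow> 'f" and Y :: "(nat \<Rightarrow> nat) \<Rightarrow> 'v"
  assumes Y_def: "\<And>w. Y w = T_perm n T (inv w \<circ> w0 n) Yw0"
    and ev_linear: "Vector_Spaces.linear scale (*) ev"
    and ev_Y_ne_0_iff: "\<And>w. w \<in> Sn n \<Longrightarrow> ev (Y w) \<noteq> 0 \<longleftrightarrow> w = id"
begin

lemma T_Y_descent: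
  assumes v: "v permutes {1..n}" and j: "j \<in> {1..<n}" and desc: "v (Suc j) < v j"
  shows "T j (Y v) = Y (v \<circ> simple_refl j)"
proof -
  define x where "x = inv v \<circ> w0 n"
  have x: "x permutes {1..n}"
    unfolding x_def by (intro permutes_compose w0_permutes permutes_inv v)
  have "inv x = w0 n \<circ> v"
    unfolding x_def
    by (simp add: o_inv_distrib permutes_bij[OF permutes_inv[OF v]] permutes_bij[OF w0_permutes]
        inv_w0 permutes_inv_inv[OF v])
  moreover have "v j \<in> {1..n}" "v (Suc j) \<in> {1..n}"
    using j permutes_in_image[OF v] by auto
  ultimately have "inv x j < inv x (Suc j)"
    using desc by (auto simp: w0_def)
  moreover have "inv (v \<circ> simple_refl j) \<circ> w0 n = simple_refl j \<circ> x"
    unfolding x_def by (simp add: o_inv_distrib permutes_bij[OF v] o_assoc)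
  ultimately show ?thesis
    using T_perm_simple_refl_comp[OF x j] by (simp add: Y_def x_def)
qed

lemma Tb_Y_descent:
  assumes "v permutes {1..n}" "j \<in> {1..<n}" "v (Suc j) < v j"
  shows "Tb j (Y v) = Y (v \<circ> simple_refl j) + scale (p - q) (Y v)"
  using T_Y_descent[OF assms] by (simp add: Tbar_def)

lemma Tb_Y_ascent:
  assumes v: "v permutes {1..n}" and j: "j \<in> {1..<n}" and asc: "v j < v (Suc j)"
  shows "Tb j (Y v) = scale (p * q) (Y (v \<circ> simple_refl j))"
proof -
  let ?v = "v \<circ> simple_refl j"
  have "?v permutes {1..n}"
    using v j by (intro permutes_compose simple_refl_permutes)
  moreover have "?v (Suc j) < ?v j"
    using asc by simp
  ultimately have "T j (Y ?v) = Y v"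
    using T_Y_descent[OF _ j] by simp
  then have "T j (Y v) = scale (p * q) (Y ?v) - scale (p - q) (Y v)"
    using T_quadratic[OF j, of "Y ?v"] by simp
  then show ?thesis
    by (simp add: Tbar_def)
qed

lemma ev_word_op_Tb_Y:
  "reduced n bs \<Longrightarrow> v permutes {1..n} \<Longrightarrow>
    ev (word_op Tb bs (Y v)) = (if perm_of_word bs = v then ev (Y id) else 0)"
proof (induction bs arbitrary: v rule: rev_induct)
  case Nil
  then show ?case
    using ev_Y_ne_0_iff[of v] by (auto simp: Sn_def)
next
  case (snoc j a)
  define u where "u = perm_of_word a"
  have a: "reduced n a" and asc: "u j < u (Suc j)"
    using reduced_snocD[OF snoc.prems(1)] by (simp_all add: u_def)
  have j: "j \<in> {1..<n}"
    using snoc.prems(1) by (simp add: reduced_def)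
  have v: "v permutes {1..n}"
    by (fact snoc.prems(2))
  have vj: "v \<circ> simple_refl j permutes {1..n}"
    using v j by (intro permutes_compose simple_refl_permutes)
  have IH: "ev (word_op Tb a (Y v')) = (if u = v' then ev (Y id) else 0)"
    if "v' permutes {1..n}" for v'
    using snoc.IH[OF a that] by (simp add: u_def)
  interpret \<phi>: Vector_Spaces.linear scale "(*)" "\<lambda>y. ev (word_op Tb a y)"
    using Vector_Spaces.linear_compose[OF word_op_Tb_linear ev_linear] a
    by (simp add: reduced_def comp_def)
  have v_ne: "v j \<noteq> v (Suc j)"
    using permutes_inj[OF v] by (metis inj_eq n_not_Suc_n)
  have u_eq: "u \<circ> simple_refl j = v \<longleftrightarrow> u = v \<circ> simple_refl j"
    by auto
  have "ev (word_op Tb (a @ [j]) (Y v)) = (if u \<circ> simple_refl j = v then ev (Y id) else 0)"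
  proof (cases "v (Suc j) < v j")
    case True
    then have "u \<noteq> v"
      using asc by auto
    then show ?thesis
      using Tb_Y_descent[OF v j True] IH[OF v] IH[OF vj] u_eq
      by (simp add: word_op_snoc \<phi>.add \<phi>.scale)
  next
    case False
    then have "u \<noteq> v \<circ> simple_refl j"
      using asc v_ne by auto
    then show ?thesis
      using Tb_Y_ascent[OF v j] False v_ne IH[OF vj] u_eq
      by (simp add: word_op_snoc \<phi>.scale)
  qed
  then have "ev (word_op Tb (a @ [j]) (Y v)) = (if perm_of_word (a @ [j]) = v then ev (Y id) else 0)"
    by (simp add: perm_of_word_snoc u_def)
  \<comment> \<open>The induction method eta-expands \<open>?case\<close>; simp would then turn \<open>\<circ>\<close> and \<open>id\<close> into lambdas.\<close>
  then show ?case .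
qed

lemma ev_T_perm_Tb_Y:
  assumes "u \<in> Sn n" "v \<in> Sn n"
  shows "ev (T_perm n Tb u (Y v)) = (if u = v then ev (Y id) else 0)"
proof -
  obtain bs where "reduced n bs" "perm_of_word bs = u" "T_perm n Tb u = word_op Tb bs"
    using T_perm_obtain_reduced_word assms(1) unfolding Sn_def by blast
  then show ?thesis
    using ev_word_op_Tb_Y assms(2) by (simp add: Sn_def)
qed

lemma T_perm_Tb_linear:
  assumes "u \<in> Sn n"
  shows "Vector_Spaces.linear scale scale (T_perm n Tb u)"
proof -
  obtain bs where "reduced n bs" "T_perm n Tb u = word_op Tb bs"
    using T_perm_obtain_reduced_word assms unfolding Sn_def by blast
  then show ?thesis
    using word_op_Tb_linear by (simp add: reduced_def)
qed

end

theorem proposition3p7: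
  fixes n :: nat
    and p q hb :: "'f::field_char_0"
    and t :: "nat \<Rightarrow> 'f"
    and scale :: "'f \<Rightarrow> 'v::ab_group_add \<Rightarrow> 'v"
    and T X :: "nat \<Rightarrow> 'v \<Rightarrow> 'v"
    and Yw0 :: 'v
    and ev :: "'v \<Rightarrow> 'f"
    and Y :: "(nat \<Rightarrow> nat) \<Rightarrow> 'v"
  assumes vs: "vector_space scale"
    and act: "hecke_action n p q hb scale T X"
    and Y_def: "\<And>w. Y w = T_perm n T (inv w \<circ> w0 n) Yw0"
    and inj: "inj_on Y (Sn n)"
    and indep: "\<not> module.dependent scale (Y ` Sn n)"
    and spans: "module.span scale (Y ` Sn n) = UNIV"
    and ev_lin: "Vector_Spaces.linear scale (*) ev"
    and ev_nz: "\<And>w. w \<in> Sn n \<Longrightarrow> ev (Y w) \<noteq> 0 \<longleftrightarrow> w = id"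
    and ev_x: "\<And>i w. i \<in> {1..n} \<Longrightarrow> w \<in> Sn n \<Longrightarrow> ev (X i (Y w)) = t i * ev (Y w)"
  shows "(\<forall>u\<in>Sn n. \<forall>v\<in>Sn n.
            ev (T_perm n (Tbar scale p q T) u (Y v)) = (if u = v then ev (Y id) else 0))
       \<and> (\<forall>y. y = scale (1 / ev (Y id))
                 (\<Sum>w\<in>Sn n. scale (ev (T_perm n (Tbar scale p q T) w y)) (Y w)))"
proof -
  interpret schubert_representation scale n p q hb T X Yw0 ev Y
    by (intro schubert_representation.intro hecke_module.intro schubert_representation_axioms.intro
        hecke_module_axioms.intro vs act Y_def ev_lin ev_nz)
  have fin: "finite (Sn n)" and "id \<in> Sn n"
    by (simp_all add: Sn_def permutes_id finite_permutations)
  then have nz: "ev (Y id) \<noteq> 0"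
    using ev_nz by blast
  have lin: "Vector_Spaces.linear scale (*) (\<lambda>y. ev (T_perm n Tb w y))" if "w \<in> Sn n" for w
    using Vector_Spaces.linear_compose[OF T_perm_Tb_linear[OF that] ev_lin] by (simp add: comp_def)
  have dual: "ev (T_perm n Tb u (Y v)) = (if u = v then ev (Y id) else 0)"
    if "u \<in> Sn n" "v \<in> Sn n" for u v
    using that by (rule ev_T_perm_Tb_Y)
  have "y = scale (1 / ev (Y id)) (\<Sum>w\<in>Sn n. scale (ev (T_perm n Tb w y)) (Y w))" for y
    by (rule biorthogonal_expansion[OF fin inj spans lin dual nz])
  with dual show ?thesis
    by blast
qed

end
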